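(* Let $N\in\mathbb{N}$ with $N\ge3$, $0\le r\le N+1$ and $0\le\ell\le 2N+2$ integers. Then \[ \mathcal{M}_{2r,2\ell}\le\begin{cases}\frac{0.2^\ell}{1.3^{2r}}&\text{if }\ell\ge1,\\[2pt] \frac{0.7}{1.3^{2r}}&\text{if }\ell=0.\end{cases} \]
   Context: $n_N:=\left(\frac{3(3N+4)\log(6N+8)}{1.3^2}\right)^4$ (natural log), and for $r,\ell\in\mathbb{N}_0$ with $\ell$ even, $\mathcal{M}_{r,\ell}:=\sup\left\{\frac{1.4^\ell}{1.3^r}\Gamma\left(\frac{\ell+1}{2}\right)n^{\frac\ell8-\frac r4+\frac{N+2}{2}}e^{-1.3^2n^{1/4}}:\ n\ge n_N\right\}$. *)

theory Defs
  imports "HOL-Analysis.Analysis"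
begin

definition nN :: "nat \<Rightarrow> real" where
  "nN N = ((3 * (3 * real N + 4) * ln (6 * real N + 8)) / 1.3\<^sup>2) ^ 4"

definition calM :: "nat \<Rightarrow> nat \<Rightarrow> nat \<Rightarrow> real" where
  "calM N r l = Sup {(1.4 ^ l / 1.3 ^ r) * Gamma ((real l + 1) / 2)
      * real n powr (real l / 8 - real r / 4 + (real N + 2) / 2)
      * exp (- (1.3\<^sup>2) * real n powr (1/4)) | n :: nat. real n \<ge> nN N}"

end

theory Submission
  imports Defs
begin

text \<open>Put \<open>t = n powr (1/4)\<close> and \<open>K = l + 2N + 4\<close>. Since the exponent of \<open>n\<close> is at
  most \<open>K/4\<close>, a summand of \<open>calM N (2r) (2l)\<close> is bounded by a constant times
  \<open>t powr K * exp (-1.69 t)\<close>, which decreases once \<open>t \<ge> K / 1.69\<close>. The threshold \<open>nN N = T^4\<close> is chosen with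
  \<open>1.69 T = (9N + 12) ln (6N + 8) \<ge> K\<close>, so the summands are bounded by their value at \<open>t = T\<close>.
  There \<open>exp (-1.69 T) = (6N + 8) powr (-(9N + 12))\<close> beats \<open>T powr K \<le> (6N + 8) powr (3K/2)\<close>,
  \<open>Gamma (l + 1/2) \<le> 2 l^l\<close> and the factor \<open>9.8^l\<close> left over from
  \<open>1.4^(2l) = 0.2^l * 9.8^l\<close>.\<close>

lemma Gamma_nat_plus_half_le_fact: "Gamma (real m + 1/2) \<le> sqrt pi * fact m"
proof (induction m)
  case 0
  then show ?case using Gamma_one_half_real by simp
next
  case (Suc m)
  have "real m + 1/2 \<notin> \<int>\<^sub>\<le>\<^sub>0"
    using nonpos_Ints_nonpos by fastforce
  then have "Gamma (real m + 1/2 + 1) = (real m + 1/2) * Gamma (real m + 1/2)"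
    by (rule Gamma_plus1)
  then have "Gamma (real (Suc m) + 1/2) = (real m + 1/2) * Gamma (real m + 1/2)"
    by (simp add: add_ac)
  also have "\<dots> \<le> (real m + 1) * (sqrt pi * fact m)"
    using Suc Gamma_real_pos[of "real m + 1/2"] by (intro mult_mono) auto
  also have "\<dots> = sqrt pi * fact (Suc m)"
    by (simp add: algebra_simps)
  finally show ?case .
qed

lemma ln_Gamma_nat_plus_half_le: "ln (Gamma (real m + 1/2)) \<le> ln 2 + real m * ln (real m)"
proof -
  have "sqrt pi \<le> sqrt 4"
    using pi_less_4 by (intro real_sqrt_le_mono) simp
  then have "sqrt pi * fact m \<le> 2 * real m ^ m"
    using fact_le_power[of m] by (intro mult_mono) auto
  then have "Gamma (real m + 1/2) \<le> 2 * real m ^ m"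
    using Gamma_nat_plus_half_le_fact[of m] by linarith
  then have "ln (Gamma (real m + 1/2)) \<le> ln (2 * real m ^ m)"
    using Gamma_real_pos[of "real m + 1/2"] by (subst ln_le_cancel_iff) auto
  also have "\<dots> = ln 2 + real m * ln (real m)"
    by (cases "m = 0") (simp_all add: ln_mult ln_realpow)
  finally show ?thesis .
qed

lemma ln_le_half: "0 < x \<Longrightarrow> ln x \<le> x / 2" for x :: real
  using ln_le_minus_one[of "x / 2"] ln_2_less_1 by (simp add: ln_div)

lemma ln_mult_ln_le:
  fixes c x :: real
  assumes "0 < c" "c \<le> 1" "1 < x"
  shows "ln (c * x * ln x) \<le> 3/2 * ln x"
  using assms ln_le_half[of "ln x"] ln_le_minus_one[of c] by (simp add: ln_mult)

lemma mult_ln_diff_linear_antimono: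
  fixes K c T t :: real
  assumes "0 \<le> K" "K \<le> c * T" "0 < T" "T \<le> t"
  shows "K * ln t - c * t \<le> K * ln T - c * T"
proof -
  have "ln t - ln T \<le> (t - T) / T"
    using ln_le_minus_one[of "t / T"] assms by (simp add: ln_div diff_divide_distrib)
  then have "K * (ln t - ln T) \<le> K / T * (t - T)"
    using mult_left_mono[OF _ assms(1)] by fastforce
  also have "\<dots> \<le> c * (t - T)"
    using assms by (intro mult_right_mono) (simp_all add: divide_le_eq)
  finally show ?thesis by (simp add: algebra_simps)
qed

lemma powr_mult_exp_root4_le:
  fixes n T c e K :: real
  assumes "1 \<le> T" "T ^ 4 \<le> n" "0 \<le> K" "K \<le> c * T" "e \<le> K / 4"
  shows "n powr e * exp (- c * n powr (1/4)) \<le> T powr K * exp (- c * T)"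
proof -
  define t where "t = n powr (1/4)"
  have "1 \<le> n"
    using assms(1,2) one_le_power[of T 4] by linarith
  have "t ^ 4 = n"
    unfolding t_def using \<open>1 \<le> n\<close> powr_power[of n "1/4" 4] by simp
  then have "T \<le> t"
    using assms(2) power_le_imp_le_base[of T 3 t] by (simp add: t_def)
  have "e * ln n \<le> K * ln t"
    using \<open>1 \<le> n\<close> assms(5) mult_right_mono[of e "K / 4" "ln n"] by (simp add: t_def)
  have "ln (n powr e * exp (- c * t)) = e * ln n - c * t"
    using \<open>1 \<le> n\<close> by (simp add: ln_mult)
  also have "\<dots> \<le> K * ln T - c * T"
    using mult_ln_diff_linear_antimono[OF assms(3,4) _ \<open>T \<le> t\<close>] \<open>e * ln n \<le> K * ln t\<close>
      assms(1) by simp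
  also have "\<dots> = ln (T powr K * exp (- c * T))"
    using assms(1) by (simp add: ln_mult)
  finally show ?thesis
    using \<open>1 \<le> n\<close> assms(1) unfolding t_def by (subst (asm) ln_le_cancel_iff) auto
qed

lemma one_le_ln_26: "1 \<le> ln (26::real)"
  using exp_le by (subst ln_ge_iff) auto

text \<open>The logarithm of \<open>9.8^l * 2 l^l * T powr K * exp (-1.69 T)\<close>, estimated by
  \<open>ln l \<le> u - ln 3\<close>, \<open>ln T \<le> 3/2 u\<close> and \<open>1.69 T = (9N + 12) u\<close>, where \<open>u = ln (6N + 8)\<close>.\<close>

lemma ln_summand_bound_at_threshold_le:
  fixes N l :: nat and u :: real
  assumes "2 \<le> N" "l \<le> 2 * N + 2" "ln 26 \<le> u"
  shows "real l * ln 9.8 + ln 2 + real l * (u - ln 3) + 3/2 * (real l + 2 * real N + 4) * u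
           - (9 * real N + 12) * u \<le> ln 0.7"
proof -
  have ln_quotient: "2 * ln a - 2 * ln b - ln c = ln (a * a / (b * b * c))"
    if "0 < a" "0 < b" "0 < c" for a b c :: real
    using that by (simp add: ln_div ln_mult)
  have "2 * ln 9.8 - 2 * ln 3 - ln 26 = ln (9.8 * 9.8 / (3 * 3 * 26) :: real)"
    by (rule ln_quotient) simp_all
  also have "\<dots> \<le> - 0.58"
    using ln_le_minus_one[of "9.8 * 9.8 / (3 * 3 * 26)"] by simp
  finally have "real l * (2 * ln 9.8 - 2 * ln 3 - ln 26) \<le> real l * (- 0.58)"
    by (intro mult_left_mono) auto
  moreover have "real l * ln 26 \<le> real l * u"
    using assms(3) by (intro mult_left_mono) auto
  moreover have "6 * real N + 6 - 3 * real l \<le> (6 * real N + 6 - 3 * real l) * u"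
    using assms(2,3) one_le_ln_26 mult_left_mono[of 1 u "6 * real N + 6 - 3 * real l"] by simp
  moreover have "- 3/7 \<le> ln (0.7 :: real)"
    using ln_le_minus_one[of "10/7"] by (simp add: ln_div)
  ultimately show ?thesis
    using assms(1,2) ln_2_less_1 by (simp add: algebra_simps)
qed

lemma calM_summand_scaled_le:
  fixes N r l :: nat and n :: real
  assumes "3 \<le> N" "l \<le> 2 * N + 2" "nN N \<le> n"
  shows "9.8 ^ l * Gamma (real l + 1/2) * n powr (real l / 4 - real r / 2 + (real N + 2) / 2)
           * exp (- 1.3\<^sup>2 * n powr (1/4)) \<le> 0.7"
proof -
  define u where "u = ln (6 * real N + 8)"
  define T where "T = (9 * real N + 12) * u / 1.3\<^sup>2"
  define K where "K = real l + 2 * real N + 4"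
  define G where "G = Gamma (real l + 1/2)"
  have "ln 26 \<le> u"
    using assms(1) by (simp add: u_def)
  then have "1 \<le> u"
    using one_le_ln_26 by linarith
  have "1.3\<^sup>2 * T = (9 * real N + 12) * u"
    by (simp add: T_def)
  have "K \<le> 9 * real N + 12"
    using assms(2) by (simp add: K_def)
  also have "\<dots> \<le> 1.3\<^sup>2 * T"
    using \<open>1 \<le> u\<close> mult_left_mono[of 1 u "9 * real N + 12"]
      \<open>1.3\<^sup>2 * T = (9 * real N + 12) * u\<close> by simp
  finally have "K \<le> 1.3\<^sup>2 * T" .
  then have "1 \<le> T"
    by (simp add: K_def power2_eq_square)
  have "nN N = T ^ 4"
    by (simp add: nN_def T_def u_def)
  have "ln T \<le> 3/2 * u"
    using ln_mult_ln_le[of "1.5 / 1.3\<^sup>2" "6 * real N + 8"]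
    by (simp add: T_def u_def power2_eq_square field_simps)
  moreover have "0 \<le> K"
    by (simp add: K_def)
  ultimately have "K * ln T \<le> K * (3/2 * u)"
    by (rule mult_left_mono)
  have "real l * ln (real l) \<le> real l * (u - ln 3)"
  proof (cases "l = 0")
    case False
    have "ln (3 * real l) \<le> u"
      using assms(2) False by (simp add: u_def)
    then show ?thesis
      using False by (simp add: ln_mult)
  qed simp
  have "real l / 4 - real r / 2 + (real N + 2) / 2 \<le> K / 4"
    by (simp add: K_def field_simps)
  have "G > 0"
    unfolding G_def by (rule Gamma_real_pos) simp
  have "9.8 ^ l * G * (n powr (real l / 4 - real r / 2 + (real N + 2) / 2)
          * exp (- 1.3\<^sup>2 * n powr (1/4))) \<le> 9.8 ^ l * G * (T powr K * exp (- 1.3\<^sup>2 * T))"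
    using powr_mult_exp_root4_le[OF \<open>1 \<le> T\<close> _ \<open>0 \<le> K\<close> \<open>K \<le> 1.3\<^sup>2 * T\<close>
        \<open>real l / 4 - real r / 2 + (real N + 2) / 2 \<le> K / 4\<close>] assms(3) \<open>G > 0\<close>
    by (intro mult_left_mono) (simp_all add: \<open>nN N = T ^ 4\<close>)
  also have "\<dots> \<le> 0.7"
  proof (subst ln_le_cancel_iff[symmetric])
    have "ln (9.8 ^ l * G * (T powr K * exp (- 1.3\<^sup>2 * T)))
            = real l * ln 9.8 + ln G + K * ln T - (9 * real N + 12) * u"
      using \<open>G > 0\<close> \<open>1 \<le> T\<close> \<open>1.3\<^sup>2 * T = (9 * real N + 12) * u\<close>
      by (simp add: ln_mult ln_realpow)
    also have "\<dots> \<le> ln 0.7"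
      using ln_summand_bound_at_threshold_le[of N l u] assms(1,2) \<open>ln 26 \<le> u\<close>
        \<open>K * ln T \<le> K * (3/2 * u)\<close> ln_Gamma_nat_plus_half_le[of l] \<open>real l * ln (real l) \<le> real l * (u - ln 3)\<close>
      by (simp add: G_def K_def algebra_simps)
    finally show "ln (9.8 ^ l * G * (T powr K * exp (- 1.3\<^sup>2 * T))) \<le> ln 0.7" .
  qed (use \<open>G > 0\<close> \<open>1 \<le> T\<close> in simp_all)
  finally show ?thesis
    by (simp add: G_def mult.assoc)
qed

theorem lemma3p9:
  fixes N r l :: nat
  assumes "N \<ge> 3" and "r \<le> N + 1" and "l \<le> 2 * N + 2"
  shows "calM N (2 * r) (2 * l) \<le>
           (if l \<ge> 1 then 0.2 ^ l / 1.3 ^ (2 * r) else 0.7 / 1.3 ^ (2 * r))"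
proof -
  have "(1.4::real) ^ (2 * l) = 0.2 ^ l * 9.8 ^ l"
    by (simp add: power_mult power2_eq_square flip: power_mult_distrib)
  then have summand_le: "1.4 ^ (2 * l) / 1.3 ^ (2 * r) * Gamma ((real (2 * l) + 1) / 2)
      * real n powr (real (2 * l) / 8 - real (2 * r) / 4 + (real N + 2) / 2)
      * exp (- (1.3\<^sup>2) * real n powr (1/4)) \<le> 0.2 ^ l / 1.3 ^ (2 * r) * 0.7"
    if "nN N \<le> real n" for n :: nat
    using mult_left_mono[OF calM_summand_scaled_le[OF assms(1,3) that, of r],
        of "0.2 ^ l / 1.3 ^ (2 * r)"]
    by (simp add: add_divide_distrib mult_ac)
  obtain n :: nat where "nN N \<le> real n"
    using real_arch_simple by blast
  then have "calM N (2 * r) (2 * l) \<le> 0.2 ^ l / 1.3 ^ (2 * r) * 0.7"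
    unfolding calM_def using summand_le by (intro cSup_least) auto
  also have "\<dots> \<le> (if l \<ge> 1 then 0.2 ^ l / 1.3 ^ (2 * r) else 0.7 / 1.3 ^ (2 * r))"
    by (cases "l \<ge> 1") (auto simp: divide_simps)
  finally show ?thesis .
qed

end
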